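(* Assume (A5) and fix $k\in[\underline{\theta}_1,\overline{\theta}_1]$. For $2\le t\le T$, let $F^A_t$ be the conditional distribution of $\theta_t$ given $\theta_1\ge k$ if $k<\overline{\theta}_1$ and given $\theta_1=\overline{\theta}_1$ if $k=\overline{\theta}_1$; let $F^R_t$ be the conditional distribution of $\theta_t$ given $\theta_1<k$ if $k>\underline{\theta}_1$ and given $\theta_1=\underline{\theta}_1$ if $k=\underline{\theta}_1$. Let $p^A_t$ and $p^R_t$ be monopoly prices (maximizers of $p(1-F(p))$) for $F=F^A_t$ and $F=F^R_t$, respectively. Then $p^A_t\ge p^R_t$ for every $2\le t\le T$.
   Context: (A5) Log-concave AR(1): $\theta_1\sim F_1$, a log-concave distribution with bounded support $[\underline{\theta}_1,\overline{\theta}_1]\subset\mathbb{R}_+$ and density $f_1>0$ on it; for $t\ge2$, $\theta_t=\alpha_t\theta_{t-1}+\epsilon_t$ with $\alpha_t\in(0,\frac1{2\delta})$ for a fixed $\delta\in(0,1]$, and $\epsilon_t$ drawn independently from a log-concave distribution $G_t$ with bounded support. *)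

theory Defs
  imports "HOL-Probability.Probability"
begin

definition log_concave :: "(real \<Rightarrow> real) \<Rightarrow> bool" where
  "log_concave f \<longleftrightarrow> (\<forall>x. 0 \<le> f x) \<and>
     (\<forall>x y l. 0 < l \<and> l < 1 \<longrightarrow>
        f x powr l * f y powr (1 - l) \<le> f (l * x + (1 - l) * y))"

text \<open>Sample path of the AR(1) process started from theta_1 = x with innovations e:
  theta_1 = x, theta_t = alpha_t theta_(t-1) + e_t for t >= 2 (index 0 unused, = x).\<close>
primrec ar_path :: "(nat \<Rightarrow> real) \<Rightarrow> (nat \<Rightarrow> real) \<Rightarrow> real \<Rightarrow> nat \<Rightarrow> real" where
  "ar_path \<alpha> e x 0 = x"
| "ar_path \<alpha> e x (Suc n) = (if n = 0 then x else \<alpha> (Suc n) * ar_path \<alpha> e x n + e (Suc n))"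

definition revenue_maximizer :: "(real \<Rightarrow> real) \<Rightarrow> real \<Rightarrow> bool" where
  "revenue_maximizer F p \<longleftrightarrow> (\<forall>q. q * (1 - F q) \<le> p * (1 - F p))"

definition monopoly_price :: "(real \<Rightarrow> real) \<Rightarrow> real \<Rightarrow> bool" where
  "monopoly_price F p \<longleftrightarrow> revenue_maximizer F p \<and> (\<forall>q. revenue_maximizer F q \<longrightarrow> p \<le> q)"

end

theory Submission
  imports Defs
begin

text \<open>Let \<open>a y = P(\<theta>\<^sub>t > y, \<theta>\<^sub>1 accepted)\<close> and \<open>r y = P(\<theta>\<^sub>t > y, \<theta>\<^sub>1 rejected)\<close>.
  At \<open>t = 1\<close> every accepted type is at least \<open>k\<close> and every rejected type at most \<open>k\<close>, so
  \<open>a y\<close> is the full accepted mass whenever \<open>r y > 0\<close>; hence \<open>a / r\<close> is nondecreasing, i.e. the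
  rejected distribution is below the accepted one in the hazard-rate order. The step
  \<open>\<theta>\<^sub>t = \<alpha>\<^sub>t \<theta>\<^sub>t\<^sub>-\<^sub>1 + \<epsilon>\<^sub>t\<close> maps both survival functions through the integral operator with
  kernel \<open>g\<^sub>t (x - \<alpha>\<^sub>t y)\<close>, which is totally positive of order 2 because \<open>g\<^sub>t\<close> is log-concave;
  by the basic composition formula the ratio stays monotone. Hazard-rate dominance then means
  that raising the price above the accepted monopoly price \<open>p\<^sup>A\<close> cannot pay off for the
  rejected distribution either, so its smallest revenue maximiser satisfies \<open>p\<^sup>R \<le> p\<^sup>A\<close>.\<close>

section \<open>Log-concave kernels\<close>

lemma log_concave_nonneg: "log_concave g \<Longrightarrow> 0 \<le> g x"
  by (simp add: log_concave_def)

lemma log_concave_mult_le: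
  assumes lc: "log_concave g" and d: "0 \<le> d" and e: "0 \<le> e"
  shows "g x * g (x + d + e) \<le> g (x + d) * g (x + e)"
proof (cases "d = 0 \<or> e = 0")
  case True
  then show ?thesis by (auto simp: mult.commute)
next
  case False
  with d e have "0 < d" "0 < e" by auto
  define l where "l = e / (d + e)"
  define y where "y = x + d + e"
  have l: "0 < l" "l < 1" "l * (d + e) = e" "(1 - l) * (d + e) = d"
    using \<open>0 < d\<close> \<open>0 < e\<close> by (auto simp: l_def field_simps)
  have "l * x + (1 - l) * y = x + (1 - l) * (d + e)" "(1 - l) * x + (1 - (1 - l)) * y = x + l * (d + e)"
    unfolding y_def by algebra+
  then have "l * x + (1 - l) * y = x + d" and "(1 - l) * x + (1 - (1 - l)) * y = x + e"
    using l(3,4) by simp_all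
  then have A: "g x powr l * g y powr (1 - l) \<le> g (x + d)"
    and B: "g x powr (1 - l) * g y powr (1 - (1 - l)) \<le> g (x + e)"
    using lc l(1,2) unfolding log_concave_def by (metis, smt (verit))
  have "g z powr l * g z powr (1 - l) = g z" for z
    using log_concave_nonneg[OF lc, of z] by (simp flip: powr_add)
  then have "g x * g y = (g x powr l * g x powr (1 - l)) * (g y powr l * g y powr (1 - l))"
    by simp
  also have "\<dots> = (g x powr l * g y powr (1 - l)) * (g x powr (1 - l) * g y powr (1 - (1 - l)))"
    by (simp add: ac_simps)
  also have "\<dots> \<le> g (x + d) * g (x + e)"
    using A B log_concave_nonneg[OF lc] by (intro mult_mono) auto
  finally show ?thesis
    unfolding y_def .
qed

lemma log_concave_kernel_tp2:
  assumes "log_concave g" "0 < c" "p \<le> q" "z \<le> y"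
  shows "g (p - c * y) * g (q - c * z) \<le> g (q - c * y) * g (p - c * z)"
  using log_concave_mult_le[OF assms(1), of "q - p" "c * (y - z)" "p - c * y"] assms(2-4)
  by (simp add: algebra_simps)

section \<open>Hazard-rate order and monopoly prices\<close>

text \<open>\<open>FR\<close> lies below \<open>FA\<close> in the hazard-rate order: \<open>(1 - FA) / (1 - FR)\<close> is
  nondecreasing, written without division.\<close>
definition hazard_rate_le :: "(real \<Rightarrow> real) \<Rightarrow> (real \<Rightarrow> real) \<Rightarrow> bool" where
  "hazard_rate_le FR FA \<longleftrightarrow>
     (\<forall>p q. p \<le> q \<longrightarrow> (1 - FA p) * (1 - FR q) \<le> (1 - FA q) * (1 - FR p))"

lemma revenue_le_at_maximizer_if_hazard_rate_le:
  fixes FA FR :: "real \<Rightarrow> real"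
  assumes hr: "hazard_rate_le FR FA" and FR_le_1: "\<And>p. FR p \<le> 1"
    and stoch: "\<And>p. FA p \<le> FR p"
    and pA: "revenue_maximizer FA pA" and "pA \<le> q"
  shows "q * (1 - FR q) \<le> pA * (1 - FR pA)"
proof -
  define SA where "SA p = 1 - FA p" for p
  define SR where "SR p = 1 - FR p" for p
  have SR_nonneg: "0 \<le> SR p" and SR_le_SA: "SR p \<le> SA p" for p
    using FR_le_1 stoch by (simp_all add: SA_def SR_def)
  have max: "x * SA x \<le> pA * SA pA" for x
    using pA by (simp add: revenue_maximizer_def SA_def SR_def)
  show ?thesis
  proof (cases "pA * SA pA = 0")
    case True
    have "q * SR q \<le> 0"
    proof (cases "0 \<le> q")
      case True
      then have "q * SR q \<le> q * SA q" using SR_le_SA by (simp add: mult_left_mono)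
      then show ?thesis using max[of q] \<open>pA * SA pA = 0\<close> by simp
    qed (use SR_nonneg in \<open>simp add: mult_nonpos_nonneg\<close>)
    moreover have "0 \<le> pA * SR pA"
      using True SR_nonneg[of pA] SR_le_SA[of pA] by (cases "0 \<le> pA") auto
    ultimately show ?thesis by (simp add: SA_def SR_def)
  next
    case False
    with max[of 0] have "0 < pA * SA pA" by linarith
    then have "0 < pA" "0 < SA pA"
      using SR_nonneg[of pA] SR_le_SA[of pA] by (auto simp: zero_less_mult_iff)
    have "SA pA * (q * SR q) = q * (SA pA * SR q)" by simp
    also have "\<dots> \<le> q * (SA q * SR pA)"
      using hr \<open>pA \<le> q\<close> \<open>0 < pA\<close> by (intro mult_left_mono) (auto simp: hazard_rate_le_def SA_def SR_def)
    also have "\<dots> = (q * SA q) * SR pA" by simp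
    also have "\<dots> \<le> (pA * SA pA) * SR pA"
      using max SR_nonneg by (intro mult_right_mono)
    also have "\<dots> = SA pA * (pA * SR pA)" by simp
    finally show ?thesis
      using \<open>0 < SA pA\<close> by (simp add: SA_def SR_def)
  qed
qed

lemma monopoly_price_le_if_hazard_rate_le:
  fixes FA FR :: "real \<Rightarrow> real"
  assumes "hazard_rate_le FR FA" "\<And>p. FR p \<le> 1" "\<And>p. FA p \<le> FR p"
    and pA: "revenue_maximizer FA pA" and pR: "monopoly_price FR pR"
  shows "pR \<le> pA"
proof (rule ccontr)
  assume "\<not> pR \<le> pA"
  then have "pR * (1 - FR pR) \<le> pA * (1 - FR pA)"
    using revenue_le_at_maximizer_if_hazard_rate_le[OF assms(1-3) pA] by simp
  with pR have "revenue_maximizer FR pA"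
    unfolding monopoly_price_def revenue_maximizer_def by (meson order_trans)
  with pR \<open>\<not> pR \<le> pA\<close> show False
    unfolding monopoly_price_def by blast
qed

text \<open>\<open>r\<close> and \<open>a\<close> are unnormalised survival functions of total masses \<open>PR\<close> and \<open>PA\<close>;
  after normalisation \<open>r\<close> lies below \<open>a\<close> in the hazard-rate order and in the usual
  stochastic order (last conjunct).\<close>
definition hr_ordered :: "(real \<Rightarrow> real) \<Rightarrow> real \<Rightarrow> (real \<Rightarrow> real) \<Rightarrow> real \<Rightarrow> bool" where
  "hr_ordered r PR a PA \<longleftrightarrow> antimono r \<and> antimono a
     \<and> (\<forall>x. 0 \<le> r x \<and> r x \<le> PR \<and> 0 \<le> a x \<and> a x \<le> PA)
     \<and> (\<forall>p q. p \<le> q \<longrightarrow> a p * r q \<le> a q * r p)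
     \<and> (\<forall>x. PA * r x \<le> PR * a x)"

lemma monopoly_price_le_if_hr_ordered:
  fixes FA FR :: "real \<Rightarrow> real"
  assumes hr: "hr_ordered r PR a PA" and "0 < PA" "0 < PR"
    and FA: "\<And>p. 1 - FA p = a p / PA" and FR: "\<And>p. 1 - FR p = r p / PR"
    and pA: "revenue_maximizer FA pA" and pR: "monopoly_price FR pR"
  shows "pR \<le> pA"
proof (rule monopoly_price_le_if_hazard_rate_le[OF _ _ _ pA pR])
  show "hazard_rate_le FR FA"
    unfolding hazard_rate_le_def FA FR
    using hr \<open>0 < PA\<close> \<open>0 < PR\<close> by (auto simp: hr_ordered_def field_simps)
  show "FR p \<le> 1" for p
    using FR[of p] hr \<open>0 < PR\<close> unfolding hr_ordered_def
    by (metis diff_ge_0_iff_ge less_eq_real_def zero_le_divide_iff)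
  show "FA p \<le> FR p" for p
  proof -
    have "PA * r p \<le> PR * a p"
      using hr by (simp add: hr_ordered_def)
    then have "r p / PR \<le> a p / PA"
      using \<open>0 < PA\<close> \<open>0 < PR\<close> by (simp add: field_simps mult.commute)
    then show ?thesis
      using FA[of p] FR[of p] by linarith
  qed
qed

lemma (in finite_measure) hr_ordered_if_separated:
  assumes [measurable]: "XR \<in> borel_measurable M" "XA \<in> borel_measurable M"
    and ER: "ER \<in> sets M" and EA: "EA \<in> sets M"
    and sep: "\<And>\<omega> \<omega>'. \<omega> \<in> ER \<Longrightarrow> \<omega>' \<in> EA \<Longrightarrow> XR \<omega> \<le> XA \<omega>'"
  shows "hr_ordered (\<lambda>y. measure M {\<omega>\<in>ER. y < XR \<omega>}) (measure M ER)
                    (\<lambda>y. measure M {\<omega>\<in>EA. y < XA \<omega>}) (measure M EA)"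
proof -
  define r where "r y = measure M {\<omega>\<in>ER. y < XR \<omega>}" for y
  define a where "a y = measure M {\<omega>\<in>EA. y < XA \<omega>}" for y
  have sets: "{\<omega>\<in>E. y < X \<omega>} \<in> sets M" if "E \<in> sets M" "X \<in> borel_measurable M" for E and X :: "'a \<Rightarrow> real" and y
  proof -
    have "{\<omega>\<in>E. y < X \<omega>} = {\<omega>\<in>space M. y < X \<omega>} \<inter> E"
      using sets.sets_into_space[OF that(1)] by auto
    moreover have "{\<omega>\<in>space M. y < X \<omega>} \<in> sets M"
      using that(2) by measurable
    ultimately show ?thesis
      using that(1) by simp
  qed
  have mono: "antimono r" "antimono a"
    unfolding r_def a_def using sets ER EA by (auto intro!: antimonoI finite_measure_mono)
  have bounds: "0 \<le> r x \<and> r x \<le> measure M ER \<and> 0 \<le> a x \<and> a x \<le> measure M EA" for x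
    unfolding r_def a_def using ER EA by (auto intro!: finite_measure_mono)
  have full: "a q = measure M EA" if "r q \<noteq> 0" for q
  proof -
    from that obtain \<omega> where "\<omega> \<in> ER" "q < XR \<omega>"
      unfolding r_def a_def by (metis (no_types, lifting) empty_Collect_eq measure_empty)
    with sep have "{\<omega>'\<in>EA. q < XA \<omega>'} = EA"
      by (auto intro: less_le_trans)
    then show ?thesis
      unfolding r_def a_def by simp
  qed
  have "a p * r q \<le> a q * r p" if "p \<le> q" for p q
  proof (cases "r q = 0")
    case False
    then have "a p * r q \<le> a q * r q"
      using full bounds by (simp add: mult_right_mono)
    also have "\<dots> \<le> a q * r p"
      using mono(1) that bounds by (intro mult_left_mono) (auto dest: antimonoD)
    finally show ?thesis .
  qed (use bounds in simp)
  moreover have "measure M EA * r q \<le> measure M ER * a q" for q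
  proof (cases "r q = 0")
    case False
    have "measure M EA * r q \<le> measure M EA * measure M ER"
      using bounds[of q] by (intro mult_left_mono) auto
    then show ?thesis
      using full[OF False] by (simp add: mult.commute)
  qed (use bounds in simp)
  ultimately show ?thesis
    using mono bounds unfolding hr_ordered_def r_def a_def by blast
qed

section \<open>Convolution with a log-concave density\<close>

lemma borel_measurable_antimono:
  fixes f :: "real \<Rightarrow> real"
  assumes "antimono f"
  shows "f \<in> borel_measurable borel"
proof -
  have "mono (\<lambda>x. - f x)"
    using assms by (auto simp: mono_def antimono_def)
  then have "(\<lambda>x. - (- f x)) \<in> borel_measurable borel"
    by (intro borel_measurable_uminus borel_measurable_mono)
  then show ?thesis by simp
qed

lemma integrable_bounded_mult:
  fixes f g :: "'a \<Rightarrow> real"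
  assumes "f \<in> borel_measurable M" "\<And>x. \<bar>f x\<bar> \<le> B" "integrable M g"
  shows "integrable M (\<lambda>x. f x * g x)"
proof (rule Bochner_Integration.integrable_bound)
  show "integrable M (\<lambda>x. B * g x)" using assms(3) by simp
  show "(\<lambda>x. f x * g x) \<in> borel_measurable M" using assms(1,3) by measurable
  have "\<bar>f x\<bar> * \<bar>g x\<bar> \<le> \<bar>B\<bar> * \<bar>g x\<bar>" for x
    using assms(2)[of x] by (intro mult_right_mono) auto
  then show "AE x in M. norm (f x * g x) \<le> norm (B * g x)"
    by (simp add: abs_mult)
qed

lemma (in pair_sigma_finite) integral_mult_product:
  fixes f g :: "_ \<Rightarrow> real"
  assumes f: "integrable M1 f" and g: "integrable M2 g"
  shows "integrable (M1 \<Otimes>\<^sub>M M2) (\<lambda>(x, y). f x * g y)"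
    and "(\<integral>(x, y). f x * g y \<partial>(M1 \<Otimes>\<^sub>M M2)) = integral\<^sup>L M1 f * integral\<^sup>L M2 g"
proof -
  have [measurable]: "f \<in> borel_measurable M1" "g \<in> borel_measurable M2"
    using f g by auto
  show int: "integrable (M1 \<Otimes>\<^sub>M M2) (\<lambda>(x, y). f x * g y)"
  proof (rule Fubini_integrable)
    have "integrable M1 (\<lambda>x. \<bar>f x\<bar> * (\<integral>y. \<bar>g y\<bar> \<partial>M2))"
      using f by (intro integrable_mult_left integrable_abs)
    then show "integrable M1 (\<lambda>x. \<integral>y. norm (case (x, y) of (x, y) \<Rightarrow> f x * g y) \<partial>M2)"
      by (simp add: abs_mult)
  qed (use g in auto)
  show "(\<integral>(x, y). f x * g y \<partial>(M1 \<Otimes>\<^sub>M M2)) = integral\<^sup>L M1 f * integral\<^sup>L M2 g"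
    using integral_fst'[OF int] by simp
qed

text \<open>If \<open>S\<close> is the survival function of \<open>Y\<close> and \<open>g\<close> the density of an independent \<open>X\<close>,
  then \<open>survival_conv c g S\<close> is the survival function of \<open>c * Y + X\<close> (for \<open>c > 0\<close>).\<close>
definition survival_conv :: "real \<Rightarrow> (real \<Rightarrow> real) \<Rightarrow> (real \<Rightarrow> real) \<Rightarrow> real \<Rightarrow> real" where
  "survival_conv c g S x = (\<integral>e. S ((x - e) / c) * g e \<partial>lborel)"

lemma integrable_survival_conv:
  fixes f g :: "real \<Rightarrow> real"
  assumes "f \<in> borel_measurable borel" "\<And>y. \<bar>f y\<bar> \<le> B" "integrable lborel g"
  shows "integrable lborel (\<lambda>e. f ((x - e) / c) * g e)"
  using assms by (intro integrable_bounded_mult[where B = B]) auto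

lemma survival_conv_mono:
  fixes f f' g :: "real \<Rightarrow> real"
  assumes "f \<in> borel_measurable borel" "\<And>y. \<bar>f y\<bar> \<le> B"
    and "f' \<in> borel_measurable borel" "\<And>y. \<bar>f' y\<bar> \<le> B'"
    and "\<And>y. f y \<le> f' y" "\<And>e. 0 \<le> g e" "integrable lborel g"
  shows "survival_conv c g f x \<le> survival_conv c g f' x"
  unfolding survival_conv_def using assms
  by (intro integral_mono integrable_survival_conv mult_right_mono) auto

lemma survival_conv_const:
  "integral\<^sup>L lborel g = 1 \<Longrightarrow> survival_conv c g (\<lambda>_. C) x = C"
  by (simp add: survival_conv_def)

lemma survival_conv_cmult:
  "survival_conv c g (\<lambda>y. C * f y) x = C * survival_conv c g f x"
  by (simp add: survival_conv_def mult.assoc)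

lemma survival_conv_antimono:
  fixes f g :: "real \<Rightarrow> real"
  assumes "antimono f" "\<And>y. \<bar>f y\<bar> \<le> B" "\<And>e. 0 \<le> g e" "integrable lborel g" "0 < c"
  shows "antimono (survival_conv c g f)"
proof (rule antimonoI)
  fix x y :: real
  assume "x \<le> y"
  then have "(x - e) / c \<le> (y - e) / c" for e
    using \<open>0 < c\<close> by (simp add: divide_right_mono)
  then show "survival_conv c g f y \<le> survival_conv c g f x"
    unfolding survival_conv_def using assms borel_measurable_antimono[OF assms(1)]
    by (intro integral_mono integrable_survival_conv mult_right_mono) (auto simp: antimonoD)
qed

lemma survival_conv_rescale:
  assumes "0 < c"
  shows "survival_conv c g f x = c * (\<integral>y. f y * g (x - c * y) \<partial>lborel)"
proof -
  have "survival_conv c g f x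
      = \<bar>- c\<bar> *\<^sub>R (\<integral>y. f ((x - (x + - c * y)) / c) * g (x + - c * y) \<partial>lborel)"
    unfolding survival_conv_def using assms by (intro lborel_integral_real_affine) simp
  then show ?thesis
    using assms by simp
qed

lemma integral_tp2_kernel_le:
  fixes a r g :: "real \<Rightarrow> real"
  assumes a: "a \<in> borel_measurable borel" "\<And>y. \<bar>a y\<bar> \<le> B"
    and r: "r \<in> borel_measurable borel" "\<And>y. \<bar>r y\<bar> \<le> B"
    and ar: "\<And>p q. p \<le> q \<Longrightarrow> a p * r q \<le> a q * r p"
    and g: "log_concave g" "integrable lborel g" and "0 < c" and "p \<le> q"
  shows "(\<integral>y. a y * g (p - c * y) \<partial>lborel) * (\<integral>y. r y * g (q - c * y) \<partial>lborel)
       \<le> (\<integral>y. a y * g (q - c * y) \<partial>lborel) * (\<integral>y. r y * g (p - c * y) \<partial>lborel)"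
proof -
  define A where "A x y = a y * g (x - c * y)" for x y
  define R where "R x y = r y * g (x - c * y)" for x y
  have "integrable lborel (\<lambda>y. g (x + (- c) * y))" for x
    using g(2) \<open>0 < c\<close> by (intro lborel_integrable_real_affine) auto
  then have int: "integrable lborel (A x)" "integrable lborel (R x)" for x
    unfolding A_def R_def using a r by (auto intro!: integrable_bounded_mult[where B = B])
  note prod = lborel_pair.integral_mult_product[OF int(1) int(2)] lborel_pair.integral_mult_product[OF int(2) int(1)]
  \<comment> \<open>Symmetrising \<open>A q y * R p z - A p y * R q z\<close> in \<open>(y, z)\<close> gives a product of two
    factors of equal sign, by the monotone ratio \<open>a / r\<close> and total positivity of the kernel.\<close>
  have "0 \<le> (\<integral>(y, z). (A q y * R p z + R p y * A q z) - (A p y * R q z + R q y * A p z) \<partial>(lborel \<Otimes>\<^sub>M lborel))"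
  proof (intro integral_nonneg_AE AE_I2, clarify)
    fix y z :: real
    have "(A q y * R p z + R p y * A q z) - (A p y * R q z + R q y * A p z)
        = (a y * r z - a z * r y) * (g (q - c * y) * g (p - c * z) - g (p - c * y) * g (q - c * z))"
      unfolding A_def R_def by (simp add: algebra_simps)
    moreover have "0 \<le> \<dots>"
      using ar[of z y] ar[of y z] log_concave_kernel_tp2[OF g(1) \<open>0 < c\<close> \<open>p \<le> q\<close>, of z y]
        log_concave_kernel_tp2[OF g(1) \<open>0 < c\<close> \<open>p \<le> q\<close>, of y z]
      by (cases "z \<le> y") (auto simp: mult.commute intro!: mult_nonneg_nonneg mult_nonpos_nonpos)
    ultimately show "0 \<le> (A q y * R p z + R p y * A q z) - (A p y * R q z + R q y * A p z)"
      by simp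
  qed
  also have "\<dots> = 2 * (integral\<^sup>L lborel (A q) * integral\<^sup>L lborel (R p) - integral\<^sup>L lborel (A p) * integral\<^sup>L lborel (R q))"
    using prod[of q p] prod[of p q] by (simp add: split_beta' algebra_simps)
  finally show ?thesis
    unfolding A_def R_def by simp
qed

lemma hr_ordered_survival_conv:
  fixes g :: "real \<Rightarrow> real"
  assumes hr: "hr_ordered r PR a PA" and "0 < c"
    and g: "log_concave g" "integrable lborel g" "integral\<^sup>L lborel g = 1"
  shows "hr_ordered (survival_conv c g r) PR (survival_conv c g a) PA"
proof -
  have mono: "antimono r" "antimono a"
    and bounds: "\<And>x. 0 \<le> r x \<and> r x \<le> PR \<and> 0 \<le> a x \<and> a x \<le> PA"
    and ratio: "\<And>p q. p \<le> q \<Longrightarrow> a p * r q \<le> a q * r p"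
    and dom: "\<And>x. PA * r x \<le> PR * a x"
    using hr by (auto simp: hr_ordered_def)
  have meas: "r \<in> borel_measurable borel" "a \<in> borel_measurable borel"
    using mono by (simp_all add: borel_measurable_antimono)
  define B where "B = PR + PA"
  have bdd: "\<bar>r x\<bar> \<le> B" "\<bar>a x\<bar> \<le> B" for x
    using bounds[of x] bounds[of 0] by (auto simp: B_def)
  note g_nonneg = log_concave_nonneg[OF g(1)]
  note conv_mono = survival_conv_mono[OF _ _ _ _ _ g_nonneg g(2)]
  have conv_antimono: "antimono (survival_conv c g r)" "antimono (survival_conv c g a)"
    using mono bdd \<open>0 < c\<close> g_nonneg g(2) by (auto intro: survival_conv_antimono)
  have conv_bounds: "0 \<le> survival_conv c g f x \<and> survival_conv c g f x \<le> P"
    if "f \<in> borel_measurable borel" "\<And>y. \<bar>f y\<bar> \<le> B" "\<And>y. 0 \<le> f y \<and> f y \<le> P" for f P x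
    using conv_mono[of "\<lambda>_. 0" 0 f B, OF _ _ that(1,2)] conv_mono[of f B "\<lambda>_. P" "\<bar>P\<bar>", OF that(1,2)] that(3)
    by (simp add: survival_conv_const[OF g(3)])
  have conv_ratio: "survival_conv c g a p * survival_conv c g r q \<le> survival_conv c g a q * survival_conv c g r p"
    if "p \<le> q" for p q
  proof -
    have "c * c * ((\<integral>y. a y * g (p - c * y) \<partial>lborel) * (\<integral>y. r y * g (q - c * y) \<partial>lborel))
       \<le> c * c * ((\<integral>y. a y * g (q - c * y) \<partial>lborel) * (\<integral>y. r y * g (p - c * y) \<partial>lborel))"
      using integral_tp2_kernel_le[OF meas(2) bdd(2) meas(1) bdd(1) ratio g(1,2) \<open>0 < c\<close> that]
      by (intro mult_left_mono) auto
    then show ?thesis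
      unfolding survival_conv_rescale[OF \<open>0 < c\<close>] by (simp only: ac_simps)
  qed
  have conv_dom: "PA * survival_conv c g r x \<le> PR * survival_conv c g a x" for x
  proof -
    have "survival_conv c g (\<lambda>y. PA * r y) x \<le> survival_conv c g (\<lambda>y. PR * a y) x"
      by (rule conv_mono[where B = "\<bar>PA\<bar> * B" and B' = "\<bar>PR\<bar> * B"])
        (use meas bdd dom in \<open>auto simp: abs_mult intro: mult_left_mono\<close>)
    then show ?thesis
      by (simp add: survival_conv_cmult)
  qed
  show ?thesis
    unfolding hr_ordered_def
    using conv_antimono conv_ratio conv_dom bounds
      conv_bounds[OF meas(1) bdd(1), of PR] conv_bounds[OF meas(2) bdd(2), of PA]
    by auto
qed

section \<open>Independent sums\<close>

lemma (in prob_space) emeasure_indep_var_Pair: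
  assumes ind: "indep_var S Z T W" and Q: "Q \<in> sets (S \<Otimes>\<^sub>M T)"
  shows "emeasure M {\<omega>\<in>space M. (Z \<omega>, W \<omega>) \<in> Q}
      = (\<integral>\<^sup>+w. emeasure M {\<omega>\<in>space M. (Z \<omega>, w) \<in> Q} \<partial>distr M T W)"
    and "(\<lambda>w. emeasure M {\<omega>\<in>space M. (Z \<omega>, w) \<in> Q}) \<in> borel_measurable T"
proof -
  have Z: "random_variable S Z" and W: "random_variable T W"
    and joint: "distr M S Z \<Otimes>\<^sub>M distr M T W = distr M (S \<Otimes>\<^sub>M T) (\<lambda>\<omega>. (Z \<omega>, W \<omega>))"
    using ind unfolding indep_var_distribution_eq by auto
  interpret Z: prob_space "distr M S Z" using Z by (rule prob_space_distr)
  interpret W: prob_space "distr M T W" using W by (rule prob_space_distr)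
  interpret ZW: pair_prob_space "distr M S Z" "distr M T W" ..
  have Q': "Q \<in> sets (distr M S Z \<Otimes>\<^sub>M distr M T W)"
    using Q by simp
  have slice: "emeasure (distr M S Z) ((\<lambda>z. (z, w)) -` Q) = emeasure M {\<omega>\<in>space M. (Z \<omega>, w) \<in> Q}" for w
    using Z sets_Pair2[OF Q] by (subst emeasure_distr) (auto intro: arg_cong[where f = "emeasure M"])
  have "emeasure M {\<omega>\<in>space M. (Z \<omega>, W \<omega>) \<in> Q} = emeasure (distr M (S \<Otimes>\<^sub>M T) (\<lambda>\<omega>. (Z \<omega>, W \<omega>))) Q"
    using Z W Q by (subst emeasure_distr) (auto intro!: arg_cong[where f = "emeasure M"])
  also have "\<dots> = (\<integral>\<^sup>+w. emeasure (distr M S Z) ((\<lambda>z. (z, w)) -` Q) \<partial>distr M T W)"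
    unfolding joint[symmetric] by (rule ZW.emeasure_pair_measure_alt2[OF Q'])
  finally show "emeasure M {\<omega>\<in>space M. (Z \<omega>, W \<omega>) \<in> Q}
      = (\<integral>\<^sup>+w. emeasure M {\<omega>\<in>space M. (Z \<omega>, w) \<in> Q} \<partial>distr M T W)"
    by (simp add: slice)
  have "(\<lambda>w. emeasure (distr M S Z) ((\<lambda>z. (z, w)) -` Q)) \<in> borel_measurable (distr M T W)"
    by (rule ZW.measurable_emeasure_Pair2[OF Q'])
  then show "(\<lambda>w. emeasure M {\<omega>\<in>space M. (Z \<omega>, w) \<in> Q}) \<in> borel_measurable T"
    by (simp add: slice)
qed

text \<open>\<open>indep_var\<close> requires both variables to have the same type, hence \<open>X\<close> is paired with \<open>0\<close>.\<close>
lemma (in prob_space) emeasure_indep_density: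
  fixes Z :: "'a \<Rightarrow> real \<times> real" and X :: "'a \<Rightarrow> real"
  assumes ind: "indep_var borel Z borel (\<lambda>\<omega>. (X \<omega>, 0::real))"
    and X: "distributed M lborel X (\<lambda>x. ennreal (g x))"
    and Q: "Q \<in> sets (borel \<Otimes>\<^sub>M borel)"
  shows "emeasure M {\<omega>\<in>space M. (Z \<omega>, X \<omega>) \<in> Q}
      = (\<integral>\<^sup>+e. ennreal (g e) * emeasure M {\<omega>\<in>space M. (Z \<omega>, e) \<in> Q} \<partial>lborel)"
proof -
  define Q' :: "((real \<times> real) \<times> real \<times> real) set" where "Q' = (\<lambda>(z, w). (z, fst w)) -` Q"
  have "(\<lambda>(z :: real \<times> real, w :: real \<times> real). (z, fst w)) \<in> measurable (borel \<Otimes>\<^sub>M borel) (borel \<Otimes>\<^sub>M borel)"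
    by (simp add: borel_prod[symmetric]) measurable
  from measurable_sets[OF this Q] have Q': "Q' \<in> sets (borel \<Otimes>\<^sub>M borel)"
    by (simp add: Q'_def space_pair_measure)
  define F where "F w = emeasure M {\<omega>\<in>space M. (Z \<omega>, w) \<in> Q'}" for w
  note F = emeasure_indep_var_Pair[OF ind Q', folded F_def]
  have [measurable]: "X \<in> borel_measurable M"
    using distributed_measurable[OF X] by simp
  have F0: "(\<lambda>x. F (x, 0)) \<in> borel_measurable borel"
    using F(2) by measurable
  have "distr M borel X = distr M lborel X"
    by (rule distr_cong) auto
  then have density: "distr M borel X = density lborel (\<lambda>x. ennreal (g x))"
    using distributed_distr_eq_density[OF X] by simp
  have "emeasure M {\<omega>\<in>space M. (Z \<omega>, X \<omega>) \<in> Q} = emeasure M {\<omega>\<in>space M. (Z \<omega>, (X \<omega>, 0)) \<in> Q'}"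
    by (simp add: Q'_def)
  also have "\<dots> = (\<integral>\<^sup>+w. F w \<partial>distr (distr M borel X) borel (\<lambda>x. (x, 0::real)))"
    using F(1) by (subst distr_distr) (auto simp: comp_def)
  also have "\<dots> = (\<integral>\<^sup>+x. F (x, 0) \<partial>distr M borel X)"
    using F(2) by (subst nn_integral_distr) auto
  also have "\<dots> = (\<integral>\<^sup>+x. ennreal (g x) * F (x, 0) \<partial>lborel)"
    unfolding density using F0 distributed_borel_measurable[OF X] by (subst nn_integral_density) auto
  finally show ?thesis
    by (simp add: F_def Q'_def)
qed

lemma (in prob_space) distributed_density_integral:
  assumes "distributed M lborel X (\<lambda>x. ennreal (g x))" "\<And>x. 0 \<le> g x"
  shows "integrable lborel g" "integral\<^sup>L lborel g = 1"
proof -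
  have "integrable lborel (\<lambda>x. g x * 1) \<longleftrightarrow> integrable M (\<lambda>x. (\<lambda>_. 1::real) (X x))"
    using assms by (intro distributed_integrable) auto
  then show "integrable lborel g" by simp
  have "(\<integral>x. g x * 1 \<partial>lborel) = (\<integral>x. (\<lambda>_. 1::real) (X x) \<partial>M)"
    using assms by (intro distributed_integral) auto
  then show "integral\<^sup>L lborel g = 1" by (simp add: prob_space)
qed

lemma (in prob_space) measure_affine_indep_sum:
  fixes Y Z X :: "'a \<Rightarrow> real"
  assumes ind: "indep_var borel (\<lambda>\<omega>. (Y \<omega>, Z \<omega>)) borel (\<lambda>\<omega>. (X \<omega>, 0::real))"
    and X: "distributed M lborel X (\<lambda>x. ennreal (g x))" and g: "\<And>x. 0 \<le> g x"
    and B: "B \<in> sets borel" and "0 < c"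
  shows "measure M {\<omega>\<in>space M. p < c * Y \<omega> + X \<omega> \<and> Z \<omega> \<in> B}
       = survival_conv c g (\<lambda>y. measure M {\<omega>\<in>space M. y < Y \<omega> \<and> Z \<omega> \<in> B}) p"
proof -
  have "(\<lambda>\<omega>. (Y \<omega>, Z \<omega>)) \<in> measurable M (borel \<Otimes>\<^sub>M borel)"
    using indep_var_rv1[OF ind] by (simp add: borel_prod)
  then have [measurable]: "Y \<in> borel_measurable M" "Z \<in> borel_measurable M"
    by (auto dest: measurable_Pair1_compose[OF _ measurable_ident] measurable_Pair2_compose[OF _ measurable_ident])
  define S where "S y = measure M {\<omega>\<in>space M. y < Y \<omega> \<and> Z \<omega> \<in> B}" for y
  have "antimono S"
    unfolding S_def using B by (intro antimonoI finite_measure_mono) auto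
  moreover have "\<bar>S y\<bar> \<le> 1" for y
    by (simp add: S_def)
  ultimately have S_int: "integrable lborel (\<lambda>e. S ((p - e) / c) * g e)"
    using distributed_density_integral[OF X g]
    by (intro integrable_survival_conv[where B = 1] borel_measurable_antimono) auto
  define Q where "Q = {((y, z), e). p < c * y + e \<and> z \<in> B}"
  define h where "h w = (c * fst (fst w) + snd w, snd (fst w))" for w :: "(real \<times> real) \<times> real"
  have "Q = h -` ({p<..} \<times> B)"
    by (auto simp: Q_def h_def)
  moreover have "h \<in> measurable (borel \<Otimes>\<^sub>M borel) (borel \<Otimes>\<^sub>M borel)"
    unfolding h_def by (simp add: borel_prod[symmetric]) measurable
  ultimately have Q: "Q \<in> sets (borel \<Otimes>\<^sub>M borel)"
    using measurable_sets[of _ "borel \<Otimes>\<^sub>M borel" "borel \<Otimes>\<^sub>M borel" "{p<..} \<times> B"] B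
    by (simp add: space_pair_measure)
  have slice: "{\<omega>\<in>space M. ((Y \<omega>, Z \<omega>), e) \<in> Q} = {\<omega>\<in>space M. (p - e) / c < Y \<omega> \<and> Z \<omega> \<in> B}" for e
    using \<open>0 < c\<close> by (auto simp: Q_def field_simps)
  have "emeasure M {\<omega>\<in>space M. ((Y \<omega>, Z \<omega>), X \<omega>) \<in> Q}
      = (\<integral>\<^sup>+e. ennreal (g e) * emeasure M {\<omega>\<in>space M. ((Y \<omega>, Z \<omega>), e) \<in> Q} \<partial>lborel)"
    by (rule emeasure_indep_density[OF ind X Q])
  also have "\<dots> = (\<integral>\<^sup>+e. ennreal (S ((p - e) / c) * g e) \<partial>lborel)"
    using g by (intro nn_integral_cong) (simp add: slice S_def emeasure_eq_measure ennreal_mult mult.commute)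
  also have "\<dots> = ennreal (survival_conv c g S p)"
    unfolding survival_conv_def using S_int g by (intro nn_integral_eq_integral) (auto simp: S_def)
  finally show ?thesis
    using g by (simp add: emeasure_eq_measure Q_def S_def survival_conv_def integral_nonneg_AE)
qed

section \<open>The AR(1) process\<close>

lemma ar_path_cong:
  "(\<And>i. 2 \<le> i \<Longrightarrow> i \<le> n \<Longrightarrow> e i = e' i) \<Longrightarrow> ar_path \<alpha> e x n = ar_path \<alpha> e' x n"
  by (induction n) auto

lemma measurable_ar_path:
  assumes "X0 \<in> borel_measurable M" "\<And>i. 2 \<le> i \<Longrightarrow> i \<le> n \<Longrightarrow> \<epsilon> i \<in> borel_measurable M"
  shows "(\<lambda>\<omega>. ar_path \<alpha> (\<lambda>i. \<epsilon> i \<omega>) (X0 \<omega>) n) \<in> borel_measurable M"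
  using assms(2)
proof (induction n)
  case (Suc n)
  then show ?case
    using assms(1) by (cases "n = 0") auto
qed (simp add: assms(1))

lemma (in prob_space) indep_var_ar_path_innovation:
  fixes \<theta> :: "'a \<Rightarrow> real" and \<epsilon> :: "nat \<Rightarrow> 'a \<Rightarrow> real"
  assumes indep: "indep_vars (\<lambda>_. borel) (\<lambda>s. if s = 1 then \<theta> else \<epsilon> s) {1..T}"
    and n: "1 \<le> n" "Suc n \<le> T" and h: "h \<in> borel_measurable borel"
  shows "indep_var borel (\<lambda>\<omega>. (ar_path \<alpha> (\<lambda>i. \<epsilon> i \<omega>) (h (\<theta> \<omega>)) n, \<theta> \<omega>))
                   borel (\<lambda>\<omega>. (\<epsilon> (Suc n) \<omega>, 0::real))"
proof -
  define X where "X = (\<lambda>\<omega> s. (if s = 1 then \<theta> else \<epsilon> s) \<omega>)"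
  define Y1 where "Y1 y = (ar_path \<alpha> y (h (y 1)) n, y 1)" for y :: "nat \<Rightarrow> real"
  define Y2 where "Y2 y = (y (Suc n), 0::real)" for y :: "nat \<Rightarrow> real"
  have "indep_var (PiM {1..n} (\<lambda>_. borel)) (\<lambda>\<omega>. restrict (X \<omega>) {1..n})
                  (PiM {Suc n} (\<lambda>_. borel)) (\<lambda>\<omega>. restrict (X \<omega>) {Suc n})"
    using indep_var_restrict[OF indep, of "{1..n}" "{Suc n}"] n by (auto simp: X_def)
  moreover have "Y1 \<in> measurable (PiM {1..n} (\<lambda>_. borel)) borel"
  proof -
    have component: "(\<lambda>y. y i) \<in> borel_measurable (PiM {1..n} (\<lambda>_. borel))" if "i \<in> {1..n}" for i
      using that by (intro measurable_component_singleton)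
    then have "(\<lambda>y. ar_path \<alpha> (\<lambda>i. y i) (h (y 1)) n) \<in> borel_measurable (PiM {1..n} (\<lambda>_. borel))"
      using n h by (intro measurable_ar_path) auto
    then show ?thesis
      unfolding Y1_def using component[of 1] n by (intro borel_measurable_Pair) auto
  qed
  moreover have "Y2 \<in> measurable (PiM {Suc n} (\<lambda>_. borel)) borel"
    unfolding Y2_def by (intro borel_measurable_Pair measurable_component_singleton) auto
  ultimately have "indep_var borel (Y1 \<circ> (\<lambda>\<omega>. restrict (X \<omega>) {1..n})) borel (Y2 \<circ> (\<lambda>\<omega>. restrict (X \<omega>) {Suc n}))"
    by (rule indep_var_compose)
  moreover have "Y1 \<circ> (\<lambda>\<omega>. restrict (X \<omega>) {1..n}) = (\<lambda>\<omega>. (ar_path \<alpha> (\<lambda>i. \<epsilon> i \<omega>) (h (\<theta> \<omega>)) n, \<theta> \<omega>))"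
    using n by (auto simp: Y1_def X_def fun_eq_iff intro!: ar_path_cong)
  moreover have "Y2 \<circ> (\<lambda>\<omega>. restrict (X \<omega>) {Suc n}) = (\<lambda>\<omega>. (\<epsilon> (Suc n) \<omega>, 0))"
    using n by (simp add: Y2_def X_def fun_eq_iff)
  ultimately show ?thesis
    by simp
qed

text \<open>Starting the process at \<open>h \<theta>\<^sub>1\<close> lets a constant \<open>h\<close> with \<open>B = UNIV\<close> cover the degenerate
  conditioning on a single initial type (\<open>\<theta>\<^sub>1 = hi\<close> or \<open>\<theta>\<^sub>1 = lo\<close>).\<close>
definition ar_survival :: "'a measure \<Rightarrow> (nat \<Rightarrow> real) \<Rightarrow> (nat \<Rightarrow> 'a \<Rightarrow> real) \<Rightarrow> ('a \<Rightarrow> real)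
    \<Rightarrow> (real \<Rightarrow> real) \<Rightarrow> real set \<Rightarrow> nat \<Rightarrow> real \<Rightarrow> real" where
  "ar_survival M \<alpha> \<epsilon> \<theta> h B n y =
     measure M {\<omega>\<in>space M. y < ar_path \<alpha> (\<lambda>i. \<epsilon> i \<omega>) (h (\<theta> \<omega>)) n \<and> \<theta> \<omega> \<in> B}"

lemma (in prob_space) ar_survival_Suc:
  assumes indep: "indep_vars (\<lambda>_. borel) (\<lambda>s. if s = 1 then \<theta> else \<epsilon> s) {1..T}"
    and n: "1 \<le> n" "Suc n \<le> T" and h: "h \<in> borel_measurable borel" and B: "B \<in> sets borel"
    and \<epsilon>: "distributed M lborel (\<epsilon> (Suc n)) (\<lambda>x. ennreal (g x))" and g: "\<And>x. 0 \<le> g x"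
    and \<alpha>: "0 < \<alpha> (Suc n)"
  shows "ar_survival M \<alpha> \<epsilon> \<theta> h B (Suc n) = survival_conv (\<alpha> (Suc n)) g (ar_survival M \<alpha> \<epsilon> \<theta> h B n)"
  unfolding ar_survival_def[abs_def]
  using measure_affine_indep_sum[OF indep_var_ar_path_innovation[OF indep n h] \<epsilon> g B \<alpha>] n
  by simp

lemma (in prob_space) hr_ordered_ar_survival:
  fixes \<theta> :: "'a \<Rightarrow> real" and \<epsilon> :: "nat \<Rightarrow> 'a \<Rightarrow> real"
  assumes indep: "indep_vars (\<lambda>_. borel) (\<lambda>s. if s = 1 then \<theta> else \<epsilon> s) {1..T}"
    and \<epsilon>: "\<forall>s\<in>{2..T}. distributed M lborel (\<epsilon> s) (\<lambda>x. ennreal (g s x))"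
    and g: "\<forall>s\<in>{2..T}. log_concave (g s)" and \<alpha>: "\<forall>s\<in>{2..T}. 0 < \<alpha> s"
    and hR: "hR \<in> borel_measurable borel" and hA: "hA \<in> borel_measurable borel"
    and BR: "BR \<in> sets borel" and BA: "BA \<in> sets borel"
    and sep: "\<And>x y. x \<in> BR \<Longrightarrow> y \<in> BA \<Longrightarrow> hR x \<le> hA y"
    and n: "1 \<le> n" "n \<le> T"
  shows "hr_ordered (ar_survival M \<alpha> \<epsilon> \<theta> hR BR n) (measure M {\<omega>\<in>space M. \<theta> \<omega> \<in> BR})
                    (ar_survival M \<alpha> \<epsilon> \<theta> hA BA n) (measure M {\<omega>\<in>space M. \<theta> \<omega> \<in> BA})"
  using n
proof (induction n rule: nat_induct_at_least)
  case base
  have [measurable]: "\<theta> \<in> borel_measurable M"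
    using indep base unfolding indep_vars_def by (metis atLeastAtMost_iff order_refl)
  have start: "ar_survival M \<alpha> \<epsilon> \<theta> h B 1 = (\<lambda>y. measure M {\<omega>\<in>{\<omega>\<in>space M. \<theta> \<omega> \<in> B}. y < h (\<theta> \<omega>)})"
    for h B
    by (auto simp: ar_survival_def intro!: arg_cong[where f = "measure M"])
  show ?case
    unfolding start
    by (rule hr_ordered_if_separated) (use BR BA hR hA sep in auto)
next
  case (Suc n)
  then have "1 \<le> n" "Suc n \<le> T" and s: "Suc n \<in> {2..T}"
    by auto
  with Suc.IH have IH: "hr_ordered (ar_survival M \<alpha> \<epsilon> \<theta> hR BR n) (measure M {\<omega>\<in>space M. \<theta> \<omega> \<in> BR})
      (ar_survival M \<alpha> \<epsilon> \<theta> hA BA n) (measure M {\<omega>\<in>space M. \<theta> \<omega> \<in> BA})"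
    by simp
  from s have lc: "log_concave (g (Suc n))" and \<alpha>': "0 < \<alpha> (Suc n)"
    and \<epsilon>': "distributed M lborel (\<epsilon> (Suc n)) (\<lambda>x. ennreal (g (Suc n) x))"
    using g \<alpha> \<epsilon> by blast+
  note g' = log_concave_nonneg[OF lc]
  note step = ar_survival_Suc[where \<theta> = \<theta> and \<epsilon> = \<epsilon> and g = "g (Suc n)" and \<alpha> = \<alpha>,
      OF indep \<open>1 \<le> n\<close> \<open>Suc n \<le> T\<close> _ _ \<epsilon>' g' \<alpha>']
  show ?case
    unfolding step[OF hR BR] step[OF hA BA]
    by (rule hr_ordered_survival_conv[OF IH \<alpha>' lc distributed_density_integral[OF \<epsilon>' g']])
qed

lemma (in prob_space) measure_pos_if_density_pos:
  fixes X :: "'a \<Rightarrow> real" and f :: "real \<Rightarrow> real"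
  assumes X: "distributed M lborel X (\<lambda>x. ennreal (f x))"
    and pos: "\<And>x. x \<in> {a<..<b} \<Longrightarrow> 0 < f x" and "a < b"
    and S: "{a<..<b} \<subseteq> S" "S \<in> sets borel"
  shows "0 < measure M {\<omega>\<in>space M. X \<omega> \<in> S}"
proof -
  have [measurable]: "X \<in> borel_measurable M"
    using distributed_measurable[OF X] by simp
  have "(\<integral>\<^sup>+x. ennreal (f x) * indicator {a<..<b} x \<partial>lborel) \<noteq> 0"
  proof
    assume "(\<integral>\<^sup>+x. ennreal (f x) * indicator {a<..<b} x \<partial>lborel) = 0"
    then have "AE x in lborel. ennreal (f x) * indicator {a<..<b} x = 0"
      using distributed_borel_measurable[OF X] by (subst (asm) nn_integral_0_iff_AE) auto
    then have "AE x in lborel. x \<notin> {a<..<b}"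
      by eventually_elim (use pos in \<open>force simp: indicator_def ennreal_eq_0_iff\<close>)
    then have "emeasure lborel {a<..<b} = 0"
      by (subst (asm) AE_iff_measurable[of "{a<..<b}"]) auto
    with \<open>a < b\<close> show False
      by simp
  qed
  then have "0 < emeasure M (X -` {a<..<b} \<inter> space M)"
    using distributed_emeasure[OF X] by (simp add: zero_less_iff_neq_zero)
  also have "\<dots> \<le> emeasure M {\<omega>\<in>space M. X \<omega> \<in> S}"
    using S by (intro emeasure_mono) auto
  finally show ?thesis
    by (simp add: emeasure_eq_measure)
qed

lemma (in prob_space) conditional_cdf_complement:
  fixes Y Z :: "'a \<Rightarrow> real"
  assumes [measurable]: "Y \<in> borel_measurable M" "Z \<in> borel_measurable M" "B \<in> sets borel"
    and pos: "0 < measure M {\<omega>\<in>space M. Z \<omega> \<in> B}"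
  shows "1 - measure M {\<omega>\<in>space M. Y \<omega> \<le> p \<and> Z \<omega> \<in> B} / measure M {\<omega>\<in>space M. Z \<omega> \<in> B}
       = measure M {\<omega>\<in>space M. p < Y \<omega> \<and> Z \<omega> \<in> B} / measure M {\<omega>\<in>space M. Z \<omega> \<in> B}"
proof -
  have "measure M {\<omega>\<in>space M. Z \<omega> \<in> B}
      = measure M ({\<omega>\<in>space M. Y \<omega> \<le> p \<and> Z \<omega> \<in> B} \<union> {\<omega>\<in>space M. p < Y \<omega> \<and> Z \<omega> \<in> B})"
    by (auto intro: arg_cong[where f = "measure M"])
  also have "\<dots> = measure M {\<omega>\<in>space M. Y \<omega> \<le> p \<and> Z \<omega> \<in> B} + measure M {\<omega>\<in>space M. p < Y \<omega> \<and> Z \<omega> \<in> B}"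
    by (intro finite_measure_Union) auto
  finally show ?thesis
    using pos by (simp add: field_simps)
qed

lemma (in prob_space) ar_monopoly_price_le:
  fixes \<theta> :: "'a \<Rightarrow> real" and \<epsilon> :: "nat \<Rightarrow> 'a \<Rightarrow> real" and FR FA :: "real \<Rightarrow> real"
  assumes indep: "indep_vars (\<lambda>_. borel) (\<lambda>s. if s = 1 then \<theta> else \<epsilon> s) {1..T}"
    and \<epsilon>: "\<forall>s\<in>{2..T}. distributed M lborel (\<epsilon> s) (\<lambda>x. ennreal (g s x))"
    and g: "\<forall>s\<in>{2..T}. log_concave (g s)" and \<alpha>: "\<forall>s\<in>{2..T}. 0 < \<alpha> s"
    and hR: "hR \<in> borel_measurable borel" and hA: "hA \<in> borel_measurable borel"
    and BR: "BR \<in> sets borel" and BA: "BA \<in> sets borel"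
    and sep: "\<And>x y. x \<in> BR \<Longrightarrow> y \<in> BA \<Longrightarrow> hR x \<le> hA y"
    and t: "1 \<le> t" "t \<le> T"
    and posR: "0 < measure M {\<omega>\<in>space M. \<theta> \<omega> \<in> BR}"
    and posA: "0 < measure M {\<omega>\<in>space M. \<theta> \<omega> \<in> BA}"
    and FR: "\<And>p. FR p = measure M {\<omega>\<in>space M. ar_path \<alpha> (\<lambda>s. \<epsilon> s \<omega>) (hR (\<theta> \<omega>)) t \<le> p \<and> \<theta> \<omega> \<in> BR}
                         / measure M {\<omega>\<in>space M. \<theta> \<omega> \<in> BR}"
    and FA: "\<And>p. FA p = measure M {\<omega>\<in>space M. ar_path \<alpha> (\<lambda>s. \<epsilon> s \<omega>) (hA (\<theta> \<omega>)) t \<le> p \<and> \<theta> \<omega> \<in> BA}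
                         / measure M {\<omega>\<in>space M. \<theta> \<omega> \<in> BA}"
    and pA: "revenue_maximizer FA pA" and pR: "monopoly_price FR pR"
  shows "pR \<le> pA"
proof (rule monopoly_price_le_if_hr_ordered[OF hr_ordered_ar_survival[OF indep \<epsilon> g \<alpha> hR hA BR BA sep t]
      posA posR _ _ pA pR])
  have rv: "(if s = 1 then \<theta> else \<epsilon> s) \<in> borel_measurable M" if "s \<in> {1..T}" for s
    using indep that unfolding indep_vars_def by blast
  have \<theta>: "\<theta> \<in> borel_measurable M"
    using rv[of 1] t by simp
  have "\<epsilon> s \<in> borel_measurable M" if "2 \<le> s" "s \<le> T" for s
    using rv[of s] that by simp
  then have path: "(\<lambda>\<omega>. ar_path \<alpha> (\<lambda>s. \<epsilon> s \<omega>) (h (\<theta> \<omega>)) t) \<in> borel_measurable M"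
    if "h \<in> borel_measurable borel" for h
    using that t by (intro measurable_ar_path measurable_compose[OF \<theta>]) auto
  show "1 - FR p = ar_survival M \<alpha> \<epsilon> \<theta> hR BR t p / measure M {\<omega>\<in>space M. \<theta> \<omega> \<in> BR}" for p
    unfolding FR ar_survival_def by (rule conditional_cdf_complement[OF path[OF hR] \<theta> BR posR])
  show "1 - FA p = ar_survival M \<alpha> \<epsilon> \<theta> hA BA t p / measure M {\<omega>\<in>space M. \<theta> \<omega> \<in> BA}" for p
    unfolding FA ar_survival_def by (rule conditional_cdf_complement[OF path[OF hA] \<theta> BA posA])
qed

theorem lemma7:
  fixes M :: "'a measure"
    and \<theta>1 :: "'a \<Rightarrow> real" and \<epsilon> :: "nat \<Rightarrow> 'a \<Rightarrow> real"
    and f1 :: "real \<Rightarrow> real" and g :: "nat \<Rightarrow> real \<Rightarrow> real"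
    and lo hi \<delta> k pA pR :: real and \<alpha> :: "nat \<Rightarrow> real" and T t :: nat
    and FA FR :: "real \<Rightarrow> real"
  assumes M: "prob_space M"
    and supp1: "0 \<le> lo" "lo < hi"
    and dist1: "distributed M lborel \<theta>1 (\<lambda>x. ennreal (f1 x))"
    and f1_pos: "\<forall>x\<in>{lo..hi}. 0 < f1 x"
    and f1_zero: "\<forall>x. x \<notin> {lo..hi} \<longrightarrow> f1 x = 0"
    and f1_lc: "log_concave f1"
    and \<delta>: "0 < \<delta>" "\<delta> \<le> 1"
    and \<alpha>: "\<forall>s\<in>{2..T}. 0 < \<alpha> s \<and> \<alpha> s < 1 / (2 * \<delta>)"
    and dist\<epsilon>: "\<forall>s\<in>{2..T}. distributed M lborel (\<epsilon> s) (\<lambda>x. ennreal (g s x))"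
    and g_lc: "\<forall>s\<in>{2..T}. log_concave (g s)"
    and g_bdd: "\<forall>s\<in>{2..T}. \<exists>a b. \<forall>x. x \<notin> {a..b} \<longrightarrow> g s x = 0"
    and indep: "prob_space.indep_vars M (\<lambda>_. borel)
                  (\<lambda>s. if s = 1 then \<theta>1 else \<epsilon> s) {1..T}"
    and k: "lo \<le> k" "k \<le> hi"
    and t: "2 \<le> t" "t \<le> T"
    and FA: "FA = (\<lambda>p. if k < hi
          then measure M {\<omega>\<in>space M. ar_path \<alpha> (\<lambda>s. \<epsilon> s \<omega>) (\<theta>1 \<omega>) t \<le> p \<and> k \<le> \<theta>1 \<omega>}
               / measure M {\<omega>\<in>space M. k \<le> \<theta>1 \<omega>}
          else measure M {\<omega>\<in>space M. ar_path \<alpha> (\<lambda>s. \<epsilon> s \<omega>) hi t \<le> p})"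
    and FR: "FR = (\<lambda>p. if lo < k
          then measure M {\<omega>\<in>space M. ar_path \<alpha> (\<lambda>s. \<epsilon> s \<omega>) (\<theta>1 \<omega>) t \<le> p \<and> \<theta>1 \<omega> < k}
               / measure M {\<omega>\<in>space M. \<theta>1 \<omega> < k}
          else measure M {\<omega>\<in>space M. ar_path \<alpha> (\<lambda>s. \<epsilon> s \<omega>) lo t \<le> p})"
    and pA: "monopoly_price FA pA"
    and pR: "monopoly_price FR pR"
  shows "pR \<le> pA"
proof -
  interpret prob_space M
    by (rule M)
  obtain hA BA where A: "hA \<in> borel_measurable borel" "BA \<in> sets borel" "\<forall>y\<in>BA. k \<le> hA y"
      "0 < measure M {\<omega>\<in>space M. \<theta>1 \<omega> \<in> BA}"
      "\<And>p. FA p = measure M {\<omega>\<in>space M. ar_path \<alpha> (\<lambda>s. \<epsilon> s \<omega>) (hA (\<theta>1 \<omega>)) t \<le> p \<and> \<theta>1 \<omega> \<in> BA}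
                  / measure M {\<omega>\<in>space M. \<theta>1 \<omega> \<in> BA}"
  proof (cases "k < hi")
    case True
    have "0 < measure M {\<omega>\<in>space M. \<theta>1 \<omega> \<in> {k..}}"
      using f1_pos k True by (intro measure_pos_if_density_pos[OF dist1, of k hi]) auto
    with True show ?thesis
      by (intro that[of "\<lambda>x. x" "{k..}"]) (auto simp: FA)
  qed (use k in \<open>intro that[of "\<lambda>_. hi" UNIV], auto simp: FA prob_space\<close>)
  obtain hR BR where R: "hR \<in> borel_measurable borel" "BR \<in> sets borel" "\<forall>x\<in>BR. hR x \<le> k"
      "0 < measure M {\<omega>\<in>space M. \<theta>1 \<omega> \<in> BR}"
      "\<And>p. FR p = measure M {\<omega>\<in>space M. ar_path \<alpha> (\<lambda>s. \<epsilon> s \<omega>) (hR (\<theta>1 \<omega>)) t \<le> p \<and> \<theta>1 \<omega> \<in> BR}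
                  / measure M {\<omega>\<in>space M. \<theta>1 \<omega> \<in> BR}"
  proof (cases "lo < k")
    case True
    have "0 < measure M {\<omega>\<in>space M. \<theta>1 \<omega> \<in> {..<k}}"
      using f1_pos k True by (intro measure_pos_if_density_pos[OF dist1, of lo k]) auto
    with True show ?thesis
      by (intro that[of "\<lambda>x. x" "{..<k}"]) (auto simp: FR)
  qed (use k in \<open>intro that[of "\<lambda>_. lo" UNIV], auto simp: FR prob_space\<close>)
  have "\<forall>s\<in>{2..T}. 0 < \<alpha> s"
    using \<alpha> by auto
  note price_le = ar_monopoly_price_le[where \<theta> = \<theta>1 and \<epsilon> = \<epsilon> and \<alpha> = \<alpha>,
      OF indep dist\<epsilon> g_lc this R(1) A(1) R(2) A(2) _ _ t(2) R(4) A(4) R(5) A(5) _ pR]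
  show ?thesis
    using A(3) R(3) t pA by (intro price_le) (auto simp: monopoly_price_def intro: order_trans)
qed

end
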